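(* Let $\Lambda\in\mathcal{M}_2$. (1) If $\Lambda$ is left-invertible, i.e. there exists $\xi\in\mathcal{M}_2$ with $(\xi*\Lambda)(\mathbf{w})=\min\{w_1,w_2\}$ for all $\mathbf{w}=(w_1,w_2)\in\mathbb{R}_+^2$, then $\Lambda(\mathbf{w})=\min\{w_1,w_2\}$ for all $\mathbf{w}$. (2) If $\partial_1\Lambda(w_1,w_2)\in\{0,1\}$ for almost all $w_2\in\mathbb{R}_+$, then there is $\alpha\in[0,1]$ with $\Lambda(w_1,w_2)=\min\{w_1,\alpha w_2\}$ for all $(w_1,w_2)\in\mathbb{R}_+^2$.
   Context: $\mathcal{M}_2$ is the set of bivariate tail dependence functions $\Lambda(\mathbf{w})=\lim_{s\searrow0}C(s\mathbf{w})/s$, $\mathbf{w}\in\mathbb{R}_+^2$ ($\mathbb{R}_+=[0,\infty)$), of $2$-copulas $C$; $\min\{w_1,w_2\}$ is the tail dependence function of the upper Fréchet–Hoeffding bound. The Markov product is $(\Lambda_1*\Lambda_2)(w_1,w_2):=\int_0^\infty\partial_2\Lambda_1(w_1,t)\,\partial_1\Lambda_2(t,w_2)\,dt$. *)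

theory Defs
  imports "HOL-Analysis.Analysis"
begin

text \<open>Bivariate copulas on the unit square (only values on [0,1]^2 matter).\<close>
definition is_copula :: "(real \<Rightarrow> real \<Rightarrow> real) \<Rightarrow> bool" where
  "is_copula C \<longleftrightarrow>
     (\<forall>u\<in>{0..1}. C u 0 = 0 \<and> C 0 u = 0 \<and> C u 1 = u \<and> C 1 u = u) \<and>
     (\<forall>u1 u2 v1 v2. 0 \<le> u1 \<and> u1 \<le> u2 \<and> u2 \<le> 1 \<and> 0 \<le> v1 \<and> v1 \<le> v2 \<and> v2 \<le> 1 \<longrightarrow>
        C u2 v2 - C u2 v1 - C u1 v2 + C u1 v1 \<ge> 0)"

text \<open>Membership in M_2: L is the tail dependence function of some 2-copula C,
  i.e. L(w) = lim_{s -> 0+} C(s w)/s for all w in R_+^2.\<close>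
definition is_tdf :: "(real \<Rightarrow> real \<Rightarrow> real) \<Rightarrow> bool" where
  "is_tdf L \<longleftrightarrow> (\<exists>C. is_copula C \<and>
     (\<forall>w1 w2. 0 \<le> w1 \<longrightarrow> 0 \<le> w2 \<longrightarrow>
        ((\<lambda>s. C (s * w1) (s * w2) / s) \<longlongrightarrow> L w1 w2) (at_right 0)))"

text \<open>Partial derivatives (where they exist; value 0 elsewhere, a null set).\<close>
definition pd1 :: "(real \<Rightarrow> real \<Rightarrow> real) \<Rightarrow> real \<Rightarrow> real \<Rightarrow> real" where
  "pd1 L x y = (if (\<lambda>s. L s y) differentiable (at x) then deriv (\<lambda>s. L s y) x else 0)"

definition pd2 :: "(real \<Rightarrow> real \<Rightarrow> real) \<Rightarrow> real \<Rightarrow> real \<Rightarrow> real" where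
  "pd2 L x y = (if (\<lambda>s. L x s) differentiable (at y) then deriv (\<lambda>s. L x s) y else 0)"

definition markov_prod ::
  "(real \<Rightarrow> real \<Rightarrow> real) \<Rightarrow> (real \<Rightarrow> real \<Rightarrow> real) \<Rightarrow> real \<Rightarrow> real \<Rightarrow> real" where
  "markov_prod L1 L2 w1 w2 = (LINT t:{0..}|lborel. pd2 L1 w1 t * pd1 L2 t w2)"

end

theory Submission
  imports Defs
begin

(* The tail dependence function L is homogeneous and 2-increasing, so its section g = L(-,1)
   is monotone, 1-Lipschitz and bounded by min x 1, L w1 w2 = w2 g(w1/w2), and the secant
   slopes of g decrease along rays.  The last property replaces concavity: wherever g has a
   derivative D at t, D t <= g t and g w - g t <= D (w - t) for w >= t.

   (1) If xi * L = M, the product c of the derivatives of psi = xi(1,-) and of g has integral 1,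
   and its integral over an interval is at most the increment of psi and of g there.  For
   t >= 1 the tangent bound gives g'(t) (2 - g 1) <= 1, so c (2 - g 1) <= psi' on [1,oo).
   Since psi <= 1 and the integral of c over [0,1] is at most g 1, this yields
   (1 - g 1)^2 <= 0, i.e. g 1 = 1 and g = min(-,1).

   (2) By homogeneity the derivative of L(-,w) at 1 is that of g at 1/w, so g has derivative
   0 or 1 on a dense set.  Let alpha be the largest fixed point of g.  A derivative 1 at
   u > alpha would make u a fixed point, so derivatives 0 are dense beyond alpha and the
   tangent bound makes g constant there: g = min(-,alpha). *)

lemma is_copula_transpose:
  assumes "is_copula C"
  shows "is_copula (\<lambda>u v. C v u)"
proof -
  have "C v2 u2 - C v1 u2 - C v2 u1 + C v1 u1 \<ge> 0"
    if "0 \<le> u1" "u1 \<le> u2" "u2 \<le> 1" "0 \<le> v1" "v1 \<le> v2" "v2 \<le> 1" for u1 u2 v1 v2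
  proof -
    have "C v2 u2 - C v2 u1 - C v1 u2 + C v1 u1 \<ge> 0"
      using assms that unfolding is_copula_def by blast
    then show ?thesis by linarith
  qed
  with assms show ?thesis unfolding is_copula_def by auto
qed

lemma copula_increment_le:
  assumes "is_copula C" "0 \<le> u1" "u1 \<le> u2" "u2 \<le> 1" "0 \<le> v" "v \<le> 1"
  shows "C u2 v - C u1 v \<le> u2 - u1"
proof -
  have "C u2 1 - C u2 v - C u1 1 + C u1 v \<ge> 0"
    using assms unfolding is_copula_def by blast
  moreover have "C u2 1 = u2" "C u1 1 = u1"
    using assms unfolding is_copula_def by auto
  ultimately show ?thesis by simp
qed

lemma is_tdf_transpose: "is_tdf L \<Longrightarrow> is_tdf (\<lambda>x y. L y x)"
  unfolding is_tdf_def by (blast dest: is_copula_transpose)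

lemma eventually_at_right_mult_le_one:
  fixes R :: real
  assumes "0 \<le> R"
  shows "\<forall>\<^sub>F s in at_right 0. 0 < s \<and> s * R \<le> 1"
  unfolding eventually_at_right_field
proof (intro exI conjI allI impI)
  fix s :: real assume "0 < s" "s < 1 / (1 + R)"
  then show "0 < s" "s * R \<le> 1"
    using assms by (auto simp: field_simps)
qed (use assms in simp)

lemma tdf_right_zero:
  assumes "is_tdf L" "0 \<le> x"
  shows "L x 0 = 0"
proof -
  obtain C where C: "is_copula C" and lim: "((\<lambda>s. C (s * x) (s * 0) / s) \<longlongrightarrow> L x 0) (at_right 0)"
    using assms unfolding is_tdf_def by blast
  have "\<forall>\<^sub>F s in at_right 0. C (s * x) (s * 0) / s = 0"
    using eventually_at_right_mult_le_one[OF assms(2)]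
  proof eventually_elim
    case (elim s)
    then have "s * x \<in> {0..1}" using assms by simp
    then have "C (s * x) 0 = 0" using C unfolding is_copula_def by blast
    then show ?case by simp
  qed
  with lim have "((\<lambda>s. 0) \<longlongrightarrow> L x 0) (at_right (0::real))"
    by (rule Lim_transform_eventually)
  then show ?thesis by (simp add: tendsto_const_iff)
qed

lemma tdf_rect:
  assumes "is_tdf L" "0 \<le> x1" "x1 \<le> x2" "0 \<le> y1" "y1 \<le> y2"
  shows "L x2 y2 - L x2 y1 - L x1 y2 + L x1 y1 \<ge> 0"
proof -
  obtain C where C: "is_copula C" and lim: "\<And>x y. 0 \<le> x \<Longrightarrow> 0 \<le> y \<Longrightarrow>
      ((\<lambda>s. C (s * x) (s * y) / s) \<longlongrightarrow> L x y) (at_right 0)"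
    using assms unfolding is_tdf_def by blast
  have R: "0 \<le> x2 + y2" using assms by linarith
  have "((\<lambda>s. C (s * x2) (s * y2) / s - C (s * x2) (s * y1) / s - C (s * x1) (s * y2) / s
      + C (s * x1) (s * y1) / s) \<longlongrightarrow> L x2 y2 - L x2 y1 - L x1 y2 + L x1 y1) (at_right 0)"
    using assms by (intro tendsto_intros lim) auto
  moreover have "\<forall>\<^sub>F s in at_right 0. 0 \<le> C (s * x2) (s * y2) / s - C (s * x2) (s * y1) / s
      - C (s * x1) (s * y2) / s + C (s * x1) (s * y1) / s"
    using eventually_at_right_mult_le_one[OF R]
  proof eventually_elim
    case (elim s)
    have le: "0 \<le> s * x1" "s * x1 \<le> s * x2" "0 \<le> s * y1" "s * y1 \<le> s * y2"
      using elim assms by (auto simp: mult_left_mono)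
    moreover have "s * x2 + s * y2 \<le> 1"
      using elim by (simp add: distrib_left)
    then have "s * x2 \<le> 1" "s * y2 \<le> 1"
      using le by linarith+
    ultimately have "0 \<le> C (s * x2) (s * y2) - C (s * x2) (s * y1) - C (s * x1) (s * y2) + C (s * x1) (s * y1)"
      using C unfolding is_copula_def by blast
    with elim show ?case by (simp add: diff_divide_distrib[symmetric] add_divide_distrib[symmetric])
  qed
  ultimately show ?thesis by (rule tendsto_lowerbound) simp
qed

lemma tdf_increment_le:
  assumes "is_tdf L" "0 \<le> x1" "x1 \<le> x2" "0 \<le> y"
  shows "L x2 y - L x1 y \<le> x2 - x1"
proof -
  obtain C where C: "is_copula C" and lim: "\<And>x y. 0 \<le> x \<Longrightarrow> 0 \<le> y \<Longrightarrow>
      ((\<lambda>s. C (s * x) (s * y) / s) \<longlongrightarrow> L x y) (at_right 0)"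
    using assms unfolding is_tdf_def by blast
  have R: "0 \<le> x2 + y" using assms by linarith
  have "((\<lambda>s. C (s * x2) (s * y) / s - C (s * x1) (s * y) / s) \<longlongrightarrow> L x2 y - L x1 y) (at_right 0)"
    using assms by (intro tendsto_intros lim) auto
  moreover have "\<forall>\<^sub>F s in at_right 0. C (s * x2) (s * y) / s - C (s * x1) (s * y) / s \<le> x2 - x1"
    using eventually_at_right_mult_le_one[OF R]
  proof eventually_elim
    case (elim s)
    then have "0 \<le> s * x1" "s * x1 \<le> s * x2" "0 \<le> s * y" "s * x2 + s * y \<le> 1"
      using assms by (auto simp: mult_left_mono algebra_simps)
    then have "C (s * x2) (s * y) - C (s * x1) (s * y) \<le> s * x2 - s * x1"
      by (intro copula_increment_le[OF C]) auto
    moreover have "0 < s" using elim by simp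
    ultimately have "(C (s * x2) (s * y) - C (s * x1) (s * y)) / s \<le> x2 - x1"
      by (simp only: pos_divide_le_eq) (simp add: algebra_simps)
    then show ?case by (simp add: diff_divide_distrib)
  qed
  ultimately show ?thesis by (rule tendsto_upperbound) simp
qed

lemma tdf_homogeneous:
  assumes "is_tdf L" "0 < k" "0 \<le> x" "0 \<le> y"
  shows "L (k * x) (k * y) = k * L x y"
proof -
  obtain C where lim: "\<And>x y. 0 \<le> x \<Longrightarrow> 0 \<le> y \<Longrightarrow>
      ((\<lambda>s. C (s * x) (s * y) / s) \<longlongrightarrow> L x y) (at_right 0)"
    using assms unfolding is_tdf_def by blast
  have "filterlim (\<lambda>s. s * k) (at_right 0) (at_right (0::real))"
  proof (rule tendsto_imp_filterlim_at_right)
    show "((\<lambda>s. s * k) \<longlongrightarrow> 0) (at_right 0)"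
      by (rule tendsto_eq_intros) (auto intro: tendsto_intros)
    show "\<forall>\<^sub>F s in at_right 0. 0 < s * k"
      using assms(2) by (auto simp: eventually_at_right_field intro: exI[of _ 1])
  qed
  then have "((\<lambda>s. k * (C ((s * k) * x) ((s * k) * y) / (s * k))) \<longlongrightarrow> k * L x y) (at_right 0)"
    using lim[OF assms(3,4)] by (intro tendsto_mult_left) (rule filterlim_compose)
  also have "(\<lambda>s. k * (C ((s * k) * x) ((s * k) * y) / (s * k))) = (\<lambda>s. C (s * (k * x)) (s * (k * y)) / s)"
    using assms(2) by (auto simp: fun_eq_iff mult.assoc mult.commute[of k])
  finally have "((\<lambda>s. C (s * (k * x)) (s * (k * y)) / s) \<longlongrightarrow> k * L x y) (at_right 0)" .
  moreover have "((\<lambda>s. C (s * (k * x)) (s * (k * y)) / s) \<longlongrightarrow> L (k * x) (k * y)) (at_right 0)"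
    using assms by (intro lim) auto
  ultimately show ?thesis
    by (rule tendsto_unique[OF trivial_limit_at_right_real, symmetric])
qed

lemma tdf_left_zero: "is_tdf L \<Longrightarrow> 0 \<le> y \<Longrightarrow> L 0 y = 0"
  using tdf_right_zero[of "\<lambda>x y. L y x" y] is_tdf_transpose[of L] by simp

lemma tdf_mono_left:
  assumes "is_tdf L" "0 \<le> x1" "x1 \<le> x2" "0 \<le> y"
  shows "L x1 y \<le> L x2 y"
  using tdf_rect[OF assms(1-3) order_refl assms(4)] tdf_right_zero[OF assms(1)] assms by simp

lemma tdf_nonneg: "is_tdf L \<Longrightarrow> 0 \<le> x \<Longrightarrow> 0 \<le> y \<Longrightarrow> 0 \<le> L x y"
  using tdf_mono_left[of L 0 x y] tdf_left_zero[of L y] by simp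

lemma tdf_le_left: "is_tdf L \<Longrightarrow> 0 \<le> x \<Longrightarrow> 0 \<le> y \<Longrightarrow> L x y \<le> x"
  using tdf_increment_le[of L 0 x y] tdf_left_zero[of L y] by simp

lemma tdf_le_right: "is_tdf L \<Longrightarrow> 0 \<le> x \<Longrightarrow> 0 \<le> y \<Longrightarrow> L x y \<le> y"
  using tdf_le_left[of "\<lambda>x y. L y x" y x] is_tdf_transpose[of L] by simp

lemma tdf_section_mono: "is_tdf L \<Longrightarrow> mono_on {0..} (\<lambda>x. L x 1)"
  by (intro mono_onI) (simp add: tdf_mono_left)

lemma tdf_section_diff_mono: "is_tdf L \<Longrightarrow> mono_on {0..} (\<lambda>x. x - L x 1)"
  by (intro mono_onI) (use tdf_increment_le[of L _ _ 1] in fastforce)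

lemma tdf_section_continuous:
  assumes "is_tdf L"
  shows "continuous_on {0..} (\<lambda>x. L x 1)"
proof (rule lipschitz_on_continuous_on)
  show "1-lipschitz_on {0..} (\<lambda>x. L x 1)"
  proof (rule lipschitz_onI)
    have "\<bar>L y 1 - L x 1\<bar> \<le> y - x" if "0 \<le> x" "x \<le> y" for x y
      using tdf_mono_left[OF assms that] tdf_increment_le[OF assms that] by simp
    moreover fix x y :: real assume "x \<in> {0..}" "y \<in> {0..}"
    ultimately show "dist (L x 1) (L y 1) \<le> 1 * dist x y"
      by (cases "x \<le> y") (force simp: dist_real_def abs_minus_commute)+
  qed simp
qed

lemma tdf_section_deriv_bounds:
  assumes "is_tdf L" "0 < t" "((\<lambda>x. L x 1) has_real_derivative D) (at t)"
  shows "0 \<le> D" "D \<le> 1"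
proof -
  have t: "t \<in> interior {0..}" using assms(2) by simp
  show "0 \<le> D"
    by (rule mono_on_imp_deriv_nonneg[OF tdf_section_mono[OF assms(1)] assms(3) t])
  have "((\<lambda>x. x - L x 1) has_real_derivative 1 - D) (at t)"
    by (rule DERIV_diff[OF DERIV_ident assms(3)])
  then have "0 \<le> 1 - D"
    by (rule mono_on_imp_deriv_nonneg[OF tdf_section_diff_mono[OF assms(1)] _ t])
  then show "D \<le> 1" by simp
qed

definition slopes_decrease_along_rays :: "(real \<Rightarrow> real) \<Rightarrow> bool" where
  "slopes_decrease_along_rays g \<longleftrightarrow>
     (\<forall>a h l. 0 \<le> a \<longrightarrow> 0 \<le> h \<longrightarrow> 1 \<le> l \<longrightarrow> g (l * a + l * h) - g (l * a) \<le> l * (g (a + h) - g a))"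

lemma slopes_decrease_along_raysD:
  "slopes_decrease_along_rays g \<Longrightarrow> 0 \<le> a \<Longrightarrow> 0 \<le> h \<Longrightarrow> 1 \<le> l \<Longrightarrow>
    g (l * a + l * h) - g (l * a) \<le> l * (g (a + h) - g a)"
  unfolding slopes_decrease_along_rays_def by blast

lemma tdf_section_slopes_decrease_along_rays:
  assumes "is_tdf L"
  shows "slopes_decrease_along_rays (\<lambda>x. L x 1)"
  unfolding slopes_decrease_along_rays_def
proof (intro allI impI)
  fix a h l :: real assume "0 \<le> a" "0 \<le> h" "1 \<le> l"
  then have "L (a + h) 1 - L (a + h) (1 / l) - L a 1 + L a (1 / l) \<ge> 0"
    by (intro tdf_rect[OF assms]) (auto simp: field_simps)
  then have "l * (L (a + h) 1 - L (a + h) (1 / l) - L a 1 + L a (1 / l)) \<ge> 0"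
    using \<open>1 \<le> l\<close> by simp
  moreover have "L (l * a + l * h) 1 = l * L (a + h) (1 / l)" "L (l * a) 1 = l * L a (1 / l)"
    using tdf_homogeneous[OF assms, of l "a + h" "1 / l"] tdf_homogeneous[OF assms, of l a "1 / l"]
      \<open>0 \<le> a\<close> \<open>0 \<le> h\<close> \<open>1 \<le> l\<close> by (simp_all add: distrib_left)
  ultimately show "L (l * a + l * h) 1 - L (l * a) 1 \<le> l * (L (a + h) 1 - L a 1)"
    by (simp add: algebra_simps)
qed

lemma secant_slope_tendsto:
  assumes "(g has_real_derivative D) (at t)" "t \<noteq> 0"
  shows "((\<lambda>r. (g (t + r * t) - g t) / (r * t)) \<longlongrightarrow> D) (at_right 0)"
proof -
  have "((\<lambda>h. (g (t + h) - g t) / h) \<longlongrightarrow> D) (at 0)"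
    using assms(1) by (simp add: DERIV_def)
  moreover have "filterlim (\<lambda>r. r * t) (at 0) (at_right (0::real))"
  proof (rule filterlim_atI)
    show "((\<lambda>r. r * t) \<longlongrightarrow> 0) (at_right 0)"
      by (rule tendsto_eq_intros) (auto intro: tendsto_intros)
    show "\<forall>\<^sub>F r in at_right 0. r * t \<noteq> 0"
      using assms(2) by (auto simp: eventually_at_right_field intro: exI[of _ 1])
  qed
  ultimately show ?thesis
    by (rule filterlim_compose[of "\<lambda>h. (g (t + h) - g t) / h", unfolded o_def])
qed

lemma deriv_mult_le_of_slopes_decrease:
  fixes g :: "real \<Rightarrow> real"
  assumes slopes: "slopes_decrease_along_rays g"
    and t: "0 < t" and D: "(g has_real_derivative D) (at t)"
  shows "D * t \<le> g t - g 0"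
proof -
  define \<phi> where "\<phi> x = (g 0 - g x) / x" for x
  have "mono_on {0<..} \<phi>"
  proof (rule mono_onI)
    fix x y :: real assume "x \<in> {0<..}" "y \<in> {0<..}" "x \<le> y"
    then have "g (y / x * 0 + y / x * x) - g (y / x * 0) \<le> y / x * (g (0 + x) - g 0)"
      by (intro slopes_decrease_along_raysD[OF slopes]) auto
    with \<open>x \<in> {0<..}\<close> \<open>y \<in> {0<..}\<close> show "\<phi> x \<le> \<phi> y"
      by (simp add: \<phi>_def field_simps)
  qed
  moreover have "(\<phi> has_real_derivative (g t - g 0 - D * t) / t\<^sup>2) (at t)"
    unfolding \<phi>_def[abs_def] using D t
    by (auto intro!: derivative_eq_intros simp: field_simps power2_eq_square)
  ultimately have "0 \<le> (g t - g 0 - D * t) / t\<^sup>2"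
    by (rule mono_on_imp_deriv_nonneg) (use t in \<open>simp add: interior_open\<close>)
  with t show ?thesis
    by (simp add: zero_le_divide_iff)
qed

lemma tdf_section_deriv_mult_le:
  assumes "is_tdf L" "0 < t" "((\<lambda>x. L x 1) has_real_derivative D) (at t)"
  shows "D * t \<le> L t 1"
  using deriv_mult_le_of_slopes_decrease[OF tdf_section_slopes_decrease_along_rays[OF assms(1)] assms(2,3)]
    tdf_left_zero[of L 1] assms(1) by simp

lemma geometric_increment_le_of_slopes_decrease:
  fixes g :: "real \<Rightarrow> real"
  assumes slopes: "slopes_decrease_along_rays g" and t: "0 < t" and r: "0 < r"
  shows "g (t * (1 + r) ^ n) - g t \<le> (g (t + r * t) - g t) / (r * t) * (t * (1 + r) ^ n - t)"
proof -
  define \<sigma> where "\<sigma> = (g (t + r * t) - g t) / (r * t)"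
  have "g (t * (1 + r) ^ n) - g t \<le> \<sigma> * (t * (1 + r) ^ n - t)"
  proof (induction n)
    case (Suc n)
    define l where "l = (1 + r) ^ n"
    have "g (l * t + l * (r * t)) - g (l * t) \<le> l * (g (t + r * t) - g t)"
      using t r by (intro slopes_decrease_along_raysD[OF slopes]) (simp_all add: l_def)
    moreover have "l * t + l * (r * t) = t * (1 + r) ^ Suc n" "l * t = t * (1 + r) ^ n"
      by (simp_all add: l_def algebra_simps)
    moreover have "l * (g (t + r * t) - g t) = \<sigma> * (t * (1 + r) ^ Suc n - t * (1 + r) ^ n)"
    proof -
      have "t * (1 + r) ^ Suc n - t * (1 + r) ^ n = l * (r * t)"
        by (simp add: l_def algebra_simps)
      with t r show ?thesis
        by (simp add: \<sigma>_def)
    qed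
    ultimately have "g (t * (1 + r) ^ Suc n) - g (t * (1 + r) ^ n)
        \<le> \<sigma> * (t * (1 + r) ^ Suc n - t * (1 + r) ^ n)"
      by simp
    with Suc show ?case
      by (simp only: right_diff_distrib)
  qed simp
  then show ?thesis
    by (simp add: \<sigma>_def)
qed

lemma increment_le_deriv_mult_of_slopes_decrease:
  fixes g :: "real \<Rightarrow> real"
  assumes slopes: "slopes_decrease_along_rays g"
    and t: "0 < t" and D: "(g has_real_derivative D) (at t)" and w: "t < w"
  shows "g w - g t \<le> D * (w - t)"
proof -
  define r where "r n = root (Suc n) (w / t) - 1" for n
  have r_pos: "0 < r n" and r_pow: "t * (1 + r n) ^ Suc n = w" for n
    using t w by (simp_all add: r_def del: power_Suc)
  have "(\<lambda>n. root (Suc n) (w / t)) \<longlonglongrightarrow> 1"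
    using LIMSEQ_Suc[OF LIMSEQ_root_const, of "w / t"] t w by simp
  then have "r \<longlonglongrightarrow> 1 - 1"
    unfolding r_def[abs_def] by (intro tendsto_diff tendsto_const)
  with r_pos have "filterlim r (at_right 0) sequentially"
    by (intro tendsto_imp_filterlim_at_right) auto
  with secant_slope_tendsto[OF D] t
  have "(\<lambda>n. (g (t + r n * t) - g t) / (r n * t)) \<longlonglongrightarrow> D"
    by (auto intro: filterlim_compose)
  then have "(\<lambda>n. (g (t + r n * t) - g t) / (r n * t) * (w - t)) \<longlonglongrightarrow> D * (w - t)"
    by (rule tendsto_mult_right)
  moreover have "g w - g t \<le> (g (t + r n * t) - g t) / (r n * t) * (w - t)" for n
    using geometric_increment_le_of_slopes_decrease[OF slopes t r_pos, of n "Suc n"] r_pow[of n] by simp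
  ultimately show ?thesis
    by (intro LIMSEQ_le_const) auto
qed

lemma set_integral_difference_quotient_le:
  fixes F :: "real \<Rightarrow> real"
  assumes cont: "continuous_on UNIV F" and mono: "mono F" and \<delta>: "0 < \<delta>" and "s \<le> T"
  shows "(LINT t:{s..T}|lborel. (F (t + \<delta>) - F t) / \<delta>) \<le> F (T + \<delta>) - F s"
proof -
  define G where "G x = integral {s - 1..x} F" for x
  have G: "(G has_real_derivative F x) (at x)" if "s - 1 < x" for x
  proof -
    have "(G has_real_derivative F x) (at x within {s - 1..x + 1})"
      unfolding G_def[abs_def] using that
      by (intro integral_has_real_derivative continuous_on_subset[OF cont]) auto
    moreover have "at x within {s - 1..x + 1} = at x"
      using that by (intro at_within_interior) auto
    ultimately show ?thesis by simp
  qed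
  have G_increment: "\<delta> * F x \<le> G (x + \<delta>) - G x \<and> G (x + \<delta>) - G x \<le> \<delta> * F (x + \<delta>)"
    if x: "s \<le> x" for x
  proof -
    have "\<exists>z. x < z \<and> z < x + \<delta> \<and> G (x + \<delta>) - G x = (x + \<delta> - x) * F z"
      by (rule MVT2) (use G x \<delta> in auto)
    then obtain z where "x < z" "z < x + \<delta>" "G (x + \<delta>) - G x = (x + \<delta> - x) * F z"
      by blast
    then show ?thesis
      using monoD[OF mono, of x z] monoD[OF mono, of z "x + \<delta>"] \<delta> by simp
  qed
  define \<Phi> where "\<Phi> x = (G (x + \<delta>) - G x) / \<delta>" for x
  have "(\<Phi> has_real_derivative (F (x + \<delta>) - F x) / \<delta>) (at x)" if "s \<le> x" for x
  proof -
    have "((\<lambda>x. G (x + \<delta>)) has_real_derivative F (x + \<delta>) * 1) (at x)"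
      using that \<delta> by (intro DERIV_chain2[OF G] derivative_eq_intros) auto
    then show ?thesis
      unfolding \<Phi>_def[abs_def] using G[of x] that \<delta> by (auto intro!: derivative_eq_intros)
  qed
  then have "(LINT t:{s..T}|lborel. (F (t + \<delta>) - F t) / \<delta>) = \<Phi> T - \<Phi> s"
    unfolding set_lebesgue_integral_def using \<open>s \<le> T\<close> \<delta>
    by (intro integral_FTC_atLeastAtMost has_field_derivative_at_within
        [THEN has_real_derivative_iff_has_vector_derivative[THEN iffD1]])
      (auto intro!: continuous_intros continuous_on_compose2[OF cont])
  moreover have "\<Phi> T \<le> F (T + \<delta>)" "F s \<le> \<Phi> s"
    using G_increment[of T] G_increment[of s] \<open>s \<le> T\<close> \<delta>
    by (simp_all add: \<Phi>_def pos_divide_le_eq pos_le_divide_eq mult.commute)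
  ultimately show ?thesis by simp
qed

lemma set_integral_le_of_min_tendsto:
  fixes h :: "'a \<Rightarrow> real" and q :: "nat \<Rightarrow> 'a \<Rightarrow> real"
  assumes h: "set_integrable M S h" and q: "\<And>n. set_integrable M S (q n)"
    and q_nonneg: "\<And>n t. 0 \<le> q n t"
    and tendsto: "AE t in M. t \<in> S \<longrightarrow> (\<lambda>n. min (h t) (q n t)) \<longlonglongrightarrow> h t"
    and bound: "\<And>n. (LINT t:S|M. q n t) \<le> C n" and C: "C \<longlonglongrightarrow> c"
  shows "(LINT t:S|M. h t) \<le> c"
proof -
  have h': "integrable M (\<lambda>t. indicator S t * h t)" and q': "\<And>n. integrable M (\<lambda>t. indicator S t * q n t)"
    using h q by (simp_all add: set_integrable_def)
  define u where "u n t = min (indicator S t * h t) (indicator S t * q n t)" for n t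
  have u_measurable: "u n \<in> borel_measurable M" for n
    using borel_measurable_integrable[OF h'] borel_measurable_integrable[OF q'[of n]]
    unfolding u_def[abs_def] by measurable
  have u_bound: "AE t in M. norm (u n t) \<le> \<bar>indicator S t * h t\<bar>" for n
  proof (rule AE_I2)
    fix t
    show "norm (u n t) \<le> \<bar>indicator S t * h t\<bar>"
      using q_nonneg[of n t] by (auto simp: u_def indicator_def min_def)
  qed
  have u_tendsto: "AE t in M. (\<lambda>n. u n t) \<longlonglongrightarrow> indicator S t * h t"
    using tendsto by eventually_elim (auto simp: u_def indicator_def)
  have "(\<lambda>n. integral\<^sup>L M (u n)) \<longlonglongrightarrow> (LINT t:S|M. h t)"
    unfolding set_lebesgue_integral_def
    using integral_dominated_convergence[OF borel_measurable_integrable[OF h'] u_measurable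
        integrable_abs[OF h'] u_tendsto u_bound] by simp
  moreover have "integral\<^sup>L M (u n) \<le> C n" for n
  proof -
    have "integrable M (u n)"
      by (rule integrable_dominated_convergence2[OF borel_measurable_integrable[OF h']
            u_measurable integrable_abs[OF h'] u_tendsto u_bound])
    then have "integral\<^sup>L M (u n) \<le> (LINT t:S|M. q n t)"
      unfolding set_lebesgue_integral_def using q'[of n]
      by (intro integral_mono) (auto simp: u_def)
    with bound[of n] show ?thesis by simp
  qed
  ultimately show ?thesis
    using C by (intro LIMSEQ_le) auto
qed

lemma difference_quotient_tendsto:
  assumes "(f has_real_derivative D) (at t)" and "filterlim \<delta> (at 0) sequentially"
  shows "(\<lambda>n. (f (t + \<delta> n) - f t) / \<delta> n) \<longlonglongrightarrow> D"
  using filterlim_compose[OF assms(1)[unfolded DERIV_def] assms(2)] by simp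

lemma set_integral_le_increment_of_deriv_bound_UNIV:
  fixes F h :: "real \<Rightarrow> real"
  assumes cont: "continuous_on UNIV F" and mono: "mono F" and "s \<le> T"
    and h: "set_integrable lborel {s..T} h"
    and h_le_deriv: "\<And>t. s < t \<Longrightarrow> t < T \<Longrightarrow> h t \<noteq> 0 \<Longrightarrow>
      \<exists>D. (F has_real_derivative D) (at t) \<and> h t \<le> D"
  shows "(LINT t:{s..T}|lborel. h t) \<le> F T - F s"
proof -
  define \<delta> where "\<delta> n = inverse (real (Suc n))" for n
  have \<delta>_pos: "0 < \<delta> n" for n
    by (simp add: \<delta>_def)
  have \<delta>_tendsto: "\<delta> \<longlonglongrightarrow> 0"
    unfolding \<delta>_def by (rule LIMSEQ_inverse_real_of_nat)
  moreover have "\<forall>\<^sub>F n in sequentially. \<delta> n \<noteq> 0"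
    using \<delta>_pos by (simp add: less_imp_neq[symmetric])
  ultimately have \<delta>_at_0: "filterlim \<delta> (at 0) sequentially"
    by (rule filterlim_atI)
  define q where "q n t = (F (t + \<delta> n) - F t) / \<delta> n" for n t
  show ?thesis
  proof (rule set_integral_le_of_min_tendsto[OF h])
    show "set_integrable lborel {s..T} (q n)" for n
      unfolding q_def[abs_def] using \<delta>_pos[of n]
      by (intro borel_integrable_atLeastAtMost' continuous_intros continuous_on_compose2[OF cont]) auto
    show q_nonneg: "0 \<le> q n t" for n t
      unfolding q_def using \<delta>_pos[of n] monoD[OF mono, of t "t + \<delta> n"] by simp
    show "(LINT t:{s..T}|lborel. q n t) \<le> F (T + \<delta> n) - F s" for n
      unfolding q_def by (rule set_integral_difference_quotient_le[OF cont mono \<delta>_pos \<open>s \<le> T\<close>])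
    have "isCont F T"
      using cont by (simp add: continuous_on_eq_continuous_at)
    moreover have "(\<lambda>n. T + \<delta> n) \<longlonglongrightarrow> T"
      using tendsto_add[OF tendsto_const \<delta>_tendsto, of T] by simp
    ultimately have "(\<lambda>n. F (T + \<delta> n)) \<longlonglongrightarrow> F T"
      by (rule isCont_tendsto_compose)
    then show "(\<lambda>n. F (T + \<delta> n) - F s) \<longlonglongrightarrow> F T - F s"
      by (intro tendsto_diff tendsto_const)
    show "AE t in lborel. t \<in> {s..T} \<longrightarrow> (\<lambda>n. min (h t) (q n t)) \<longlonglongrightarrow> h t"
      using AE_lborel_singleton[of s] AE_lborel_singleton[of T]
    proof eventually_elim
      case (elim t)
      show ?case
      proof (cases "h t = 0")
        case True
        then show ?thesis
          using q_nonneg by (simp add: min_absorb1)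
      next
        case False
        show ?thesis
        proof
          assume "t \<in> {s..T}"
          with elim False h_le_deriv obtain D where D: "(F has_real_derivative D) (at t)" "h t \<le> D"
            by force
          have "(\<lambda>n. min (h t) (q n t)) \<longlonglongrightarrow> min (h t) D"
            unfolding q_def by (intro tendsto_min tendsto_const difference_quotient_tendsto[OF D(1) \<delta>_at_0])
          with D(2) show "(\<lambda>n. min (h t) (q n t)) \<longlonglongrightarrow> h t"
            by (simp add: min_absorb1)
        qed
      qed
    qed
  qed
qed

lemma set_integral_le_increment_of_deriv_bound:
  fixes f h :: "real \<Rightarrow> real"
  assumes "s \<le> T" and cont: "continuous_on {s..T} f" and mono: "mono_on {s..T} f"
    and h: "set_integrable lborel {s..T} h"
    and h_le_deriv: "\<And>t. s < t \<Longrightarrow> t < T \<Longrightarrow> h t \<noteq> 0 \<Longrightarrow>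
      \<exists>D. (f has_real_derivative D) (at t) \<and> h t \<le> D"
  shows "(LINT t:{s..T}|lborel. h t) \<le> f T - f s"
proof -
  define F where "F t = f (max s (min T t))" for t
  have "(LINT t:{s..T}|lborel. h t) \<le> F T - F s"
  proof (rule set_integral_le_increment_of_deriv_bound_UNIV[OF _ _ \<open>s \<le> T\<close> h])
    show "continuous_on UNIV F"
      unfolding F_def using \<open>s \<le> T\<close>
      by (intro continuous_on_compose2[OF cont] continuous_intros) auto
    show "mono F"
      unfolding F_def using \<open>s \<le> T\<close> by (intro monoI mono_onD[OF mono]) auto
    fix t assume t: "s < t" "t < T" and "h t \<noteq> 0"
    then obtain D where D: "(f has_real_derivative D) (at t)" "h t \<le> D"
      using h_le_deriv by blast
    have "\<forall>\<^sub>F y in nhds t. y \<in> {s<..<T}"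
      using t by (intro eventually_nhds_in_open) auto
    then have "\<forall>\<^sub>F y in nhds t. F y = f y"
      by eventually_elim (simp add: F_def)
    with D show "\<exists>D. (F has_real_derivative D) (at t) \<and> h t \<le> D"
      using DERIV_cong_ev[OF refl _ refl] by blast
  qed
  then show ?thesis
    using \<open>s \<le> T\<close> by (simp add: F_def)
qed

lemma pd2_eq_pd1_transpose: "pd2 L x y = pd1 (\<lambda>x y. L y x) y x"
  by (simp add: pd1_def pd2_def)

lemma pd1_has_real_derivative:
  assumes "pd1 L x y \<noteq> 0"
  shows "((\<lambda>s. L s y) has_real_derivative pd1 L x y) (at x)"
  using assms by (auto simp: pd1_def DERIV_deriv_iff_real_differentiable split: if_splits)

lemma tdf_pd1_bounds:
  assumes "is_tdf L" "0 < t"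
  shows "0 \<le> pd1 L t 1" "pd1 L t 1 \<le> 1"
  using tdf_section_deriv_bounds[OF assms pd1_has_real_derivative[of L t 1]]
  by (cases "pd1 L t 1 = 0"; simp)+

lemma tdf_set_integral_le_section_increment:
  assumes L: "is_tdf L" and "0 \<le> s" "s \<le> T" and h: "set_integrable lborel {s..T} h"
    and h_bounds: "\<And>t. s < t \<Longrightarrow> t < T \<Longrightarrow> 0 \<le> h t \<and> h t \<le> pd1 L t 1"
  shows "(LINT t:{s..T}|lborel. h t) \<le> L T 1 - L s 1"
proof (rule set_integral_le_increment_of_deriv_bound[OF \<open>s \<le> T\<close> _ _ h])
  show "continuous_on {s..T} (\<lambda>x. L x 1)"
    using \<open>0 \<le> s\<close> by (auto intro: continuous_on_subset[OF tdf_section_continuous[OF L]])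
  show "mono_on {s..T} (\<lambda>x. L x 1)"
    using \<open>0 \<le> s\<close> by (auto intro: mono_on_subset[OF tdf_section_mono[OF L]])
  fix t assume t: "s < t" "t < T" and "h t \<noteq> 0"
  with h_bounds[OF t] have "pd1 L t 1 \<noteq> 0"
    by auto
  with h_bounds[OF t] show "\<exists>D. ((\<lambda>x. L x 1) has_real_derivative D) (at t) \<and> h t \<le> D"
    using pd1_has_real_derivative by blast
qed

lemma tdf_pd1_mult_le:
  assumes L: "is_tdf L" and t: "1 \<le> t"
  shows "pd1 L t 1 * (2 - L 1 1) \<le> 1"
proof (cases "pd1 L t 1 = 0")
  case False
  define b where "b = pd1 L t 1"
  have b: "0 \<le> b" "b \<le> 1"
    using tdf_pd1_bounds[OF L] t by (simp_all add: b_def)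
  have "b * t \<le> L t 1"
    unfolding b_def using t by (intro tdf_section_deriv_mult_le[OF L] pd1_has_real_derivative[OF False]) simp
  moreover have "L t 1 \<le> 1" "L t 1 - L 1 1 \<le> t - 1"
    using t tdf_le_right[OF L] tdf_increment_le[OF L] by simp_all
  moreover have "b * (2 - L 1 1 - t) \<le> 2 - L 1 1 - t" if "t \<le> 2 - L 1 1"
    using b that by (simp add: mult_left_le_one_le)
  moreover have "b * (2 - L 1 1) \<le> b * t" if "2 - L 1 1 \<le> t"
    using b that by (simp add: mult_left_mono)
  ultimately show ?thesis
    unfolding b_def[symmetric] by (cases "t \<le> 2 - L 1 1") (auto simp: algebra_simps)
qed simp

lemma set_integral_Ici_split:
  fixes f :: "real \<Rightarrow> 'a::{banach, second_countable_topology}"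
  assumes f: "set_integrable lborel {a..} f" and "a \<le> b"
  shows "(LINT t:{a..}|lborel. f t) = (LINT t:{a..b}|lborel. f t) + (LINT t:{b..}|lborel. f t)"
proof -
  have "{a..} = {a..b} \<union> {b..}"
    using \<open>a \<le> b\<close> by auto
  moreover have "AE t in lborel. \<not> (t \<in> {a..b} \<and> t \<in> {b..})"
    using AE_lborel_singleton[of b] by eventually_elim auto
  ultimately show ?thesis
    using \<open>a \<le> b\<close> by (simp, intro set_integral_Un_AE set_integrable_subset[OF f]) auto
qed

lemma tdf_pd1_product_bounds:
  assumes "is_tdf L" "is_tdf \<xi>" "0 < t"
  shows "0 \<le> pd1 \<xi> t 1 * pd1 L t 1" "pd1 \<xi> t 1 * pd1 L t 1 \<le> pd1 \<xi> t 1"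
    "pd1 \<xi> t 1 * pd1 L t 1 \<le> pd1 L t 1"
  using tdf_pd1_bounds[OF assms(1,3)] tdf_pd1_bounds[OF assms(2,3)]
  by (simp_all add: mult_left_le mult_left_le_one_le)

lemma tdf_pd1_product_mass_le:
  assumes L: "is_tdf L" and \<xi>: "is_tdf \<xi>" and T: "1 \<le> T"
    and int: "set_integrable lborel {0..T} (\<lambda>t. pd1 \<xi> t 1 * pd1 L t 1)"
  shows "(LINT t:{0..1}|lborel. pd1 \<xi> t 1 * pd1 L t 1)
      + (2 - L 1 1) * (LINT t:{1..T}|lborel. pd1 \<xi> t 1 * pd1 L t 1) \<le> 1"
proof -
  have int_sub: "set_integrable lborel {s..T'} (\<lambda>t. pd1 \<xi> t 1 * pd1 L t 1)" if "0 \<le> s" "T' \<le> T" for s T'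
    using that by (intro set_integrable_subset[OF int]) auto
  have "(LINT t:{0..1}|lborel. pd1 \<xi> t 1 * pd1 L t 1) \<le> \<xi> 1 1 - \<xi> 0 1"
    using tdf_pd1_product_bounds[OF L \<xi>] int_sub T
    by (intro tdf_set_integral_le_section_increment[OF \<xi>]) auto
  moreover have "(LINT t:{1..T}|lborel. (2 - L 1 1) * (pd1 \<xi> t 1 * pd1 L t 1)) \<le> \<xi> T 1 - \<xi> 1 1"
  proof (rule tdf_set_integral_le_section_increment[OF \<xi> _ T])
    show "set_integrable lborel {1..T} (\<lambda>t. (2 - L 1 1) * (pd1 \<xi> t 1 * pd1 L t 1))"
      using int_sub by simp
    fix t assume t: "1 < t" "t < T"
    have "(2 - L 1 1) * (pd1 \<xi> t 1 * pd1 L t 1) = pd1 \<xi> t 1 * (pd1 L t 1 * (2 - L 1 1))"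
      by simp
    also have "\<dots> \<le> pd1 \<xi> t 1"
      using tdf_pd1_mult_le[OF L, of t] tdf_pd1_bounds[OF \<xi>, of t] t by (simp add: mult_left_le)
    finally show "0 \<le> (2 - L 1 1) * (pd1 \<xi> t 1 * pd1 L t 1) \<and>
        (2 - L 1 1) * (pd1 \<xi> t 1 * pd1 L t 1) \<le> pd1 \<xi> t 1"
      using tdf_pd1_product_bounds[OF L \<xi>, of t] tdf_le_left[OF L, of 1 1] t by simp
  qed simp
  moreover have "\<xi> T 1 \<le> 1" "\<xi> 0 1 = 0"
    using tdf_le_right[OF \<xi>] tdf_left_zero[OF \<xi>] T by simp_all
  ultimately show ?thesis
    by simp
qed

lemma tdf_diag_eq_one_of_left_inverse:
  assumes L: "is_tdf L" and \<xi>: "is_tdf \<xi>" and inverse: "markov_prod \<xi> L 1 1 = 1"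
  shows "L 1 1 = 1"
proof -
  define \<xi>' where "\<xi>' = (\<lambda>x y. \<xi> y x)"
  have \<xi>': "is_tdf \<xi>'"
    unfolding \<xi>'_def by (rule is_tdf_transpose[OF \<xi>])
  define c where "c t = pd1 \<xi>' t 1 * pd1 L t 1" for t
  define m where "m = L 1 1"
  define I where "I = (LINT t:{0..1}|lborel. c t)"
  have total: "(LINT t:{0..}|lborel. c t) = 1"
    using inverse by (simp add: markov_prod_def pd2_eq_pd1_transpose c_def \<xi>'_def)
  \<comment> \<open>a non-integrable function has integral 0\<close>
  then have c_int: "set_integrable lborel {0..} c"
    using not_integrable_integral_eq unfolding set_integrable_def set_lebesgue_integral_def by force
  have c_int_sub: "set_integrable lborel {s..T} c" if "0 \<le> s" for s T
    using that by (intro set_integrable_subset[OF c_int]) auto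
  have "I \<le> L 1 1 - L 0 1"
    unfolding I_def c_def using tdf_pd1_product_bounds[OF L \<xi>'] c_int_sub[unfolded c_def]
    by (intro tdf_set_integral_le_section_increment[OF L]) auto
  then have I_le_m: "I \<le> m"
    using tdf_left_zero[OF L] by (simp add: m_def)
  have "((\<lambda>T. I + (2 - m) * (LINT t:{1..T}|lborel. c t)) \<longlongrightarrow> I + (2 - m) * (LINT t:{1..}|lborel. c t)) at_top"
    using c_int by (intro tendsto_intros tendsto_set_lebesgue_integral_at_top set_integrable_subset[OF c_int]) auto
  moreover have "\<forall>\<^sub>F T in at_top. I + (2 - m) * (LINT t:{1..T}|lborel. c t) \<le> 1"
    unfolding eventually_at_top_linorder I_def c_def m_def
    using tdf_pd1_product_mass_le[OF L \<xi>'] c_int_sub[unfolded c_def] by blast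
  ultimately have "I + (2 - m) * (LINT t:{1..}|lborel. c t) \<le> 1"
    by (rule tendsto_upperbound) simp
  moreover have "(LINT t:{1..}|lborel. c t) = 1 - I"
    using set_integral_Ici_split[OF c_int, of 1] total by (simp add: I_def)
  ultimately have "(1 - m) * (1 - I) \<le> 0"
    by (simp add: algebra_simps)
  moreover have "(1 - m) * (1 - m) \<le> (1 - m) * (1 - I)"
    using I_le_m tdf_le_left[OF L, of 1 1] by (intro mult_left_mono) (auto simp: m_def)
  ultimately have "(1 - m) * (1 - m) = 0"
    using zero_le_square[of "1 - m"] by linarith
  then show ?thesis
    by (simp add: m_def)
qed

lemma tdf_section_eq_min_of_diag:
  assumes L: "is_tdf L" and diag: "L 1 1 = 1" and x: "0 \<le> x"
  shows "L x 1 = min x 1"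
proof (cases "x \<le> 1")
  case True
  then show ?thesis
    using tdf_le_left[OF L x, of 1] tdf_increment_le[OF L x True, of 1] diag by simp
next
  case False
  then show ?thesis
    using tdf_le_right[OF L x, of 1] tdf_mono_left[OF L, of 1 x 1] diag by simp
qed

lemma tdf_eq_min_of_section:
  assumes L: "is_tdf L" and min_form: "\<And>x. 0 \<le> x \<Longrightarrow> L x 1 = min x \<alpha>"
    and w: "0 \<le> w1" "0 \<le> w2"
  shows "L w1 w2 = min w1 (\<alpha> * w2)"
proof (cases "w2 = 0")
  case True
  then show ?thesis
    using tdf_right_zero[OF L] w by simp
next
  case False
  with w have "0 < w2" by simp
  then have "L w1 w2 = L (w2 * (w1 / w2)) (w2 * 1)"
    by simp
  also have "\<dots> = w2 * L (w1 / w2) 1"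
    using \<open>0 < w2\<close> w by (intro tdf_homogeneous[OF L]) auto
  also have "\<dots> = min w1 (\<alpha> * w2)"
    using \<open>0 < w2\<close> w by (simp add: min_form min_mult_distrib_left mult.commute)
  finally show ?thesis .
qed

lemma tdf_section_has_real_derivative_of_scaled:
  assumes L: "is_tdf L" and w: "0 < w" and u: "0 < u"
    and d: "((\<lambda>x. L x w) has_real_derivative d) (at u)"
  shows "((\<lambda>x. L x 1) has_real_derivative d) (at (u / w))"
proof -
  have "((\<lambda>x. L (w * x) w / w) has_real_derivative d * w / w) (at (u / w))"
    using w d by (intro DERIV_cdivide DERIV_chain2[of "\<lambda>x. L x w"]) (auto intro!: derivative_eq_intros)
  moreover have "\<forall>\<^sub>F x in nhds (u / w). L (w * x) w / w = L x 1"
  proof -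
    have "\<forall>\<^sub>F x in nhds (u / w). 0 < x"
      using u w by (intro eventually_nhds_in_open[of "{0<..}", simplified]) auto
    then show ?thesis
      by eventually_elim (use tdf_homogeneous[OF L w, of _ 1] w in auto)
  qed
  ultimately show ?thesis
    using w DERIV_cong_ev[OF refl _ refl] by fastforce
qed

lemma tdf_section_deriv_01_dense:
  assumes L: "is_tdf L"
    and ae: "AE w in lborel. 0 \<le> w \<longrightarrow> (\<exists>d\<in>{0,1}. ((\<lambda>x. L x w) has_real_derivative d) (at 1))"
    and "0 < x" "x < y"
  shows "\<exists>u. x < u \<and> u < y \<and> (\<exists>d\<in>{0,1}. ((\<lambda>x. L x 1) has_real_derivative d) (at u))"
proof (rule ccontr)
  assume none: "\<not> ?thesis"
  have "AE w in lborel. w \<notin> {1 / y<..<1 / x}"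
    using ae
  proof eventually_elim
    case (elim w)
    show ?case
    proof
      assume w: "w \<in> {1 / y<..<1 / x}"
      moreover have "0 < 1 / y"
        using \<open>0 < x\<close> \<open>x < y\<close> by simp
      ultimately have "0 < w"
        by (simp only: greaterThanLessThan_iff) linarith
      with w \<open>0 < x\<close> \<open>x < y\<close> have "x < 1 / w" "1 / w < y"
        by (auto simp: field_simps)
      from elim \<open>0 < w\<close> obtain d where "d \<in> {0, 1}" "((\<lambda>x. L x w) has_real_derivative d) (at 1)"
        by auto
      with tdf_section_has_real_derivative_of_scaled[OF L \<open>0 < w\<close> zero_less_one]
      have "\<exists>d\<in>{0, 1}. ((\<lambda>x. L x 1) has_real_derivative d) (at (1 / w))"
        by blast
      with none \<open>x < 1 / w\<close> \<open>1 / w < y\<close> show False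
        by blast
    qed
  qed
  then have "{1 / y<..<1 / x} \<in> null_sets lborel"
    by (subst AE_iff_null_sets) auto
  then have "emeasure lborel {1 / y<..<1 / x} = 0"
    by auto
  moreover have "1 / y < 1 / x"
    using \<open>0 < x\<close> \<open>x < y\<close> by (simp add: frac_less2)
  ultimately show False
    by simp
qed

lemma tdf_section_fixed_below:
  assumes L: "is_tdf L" and fixed: "L u 1 = u" and w: "0 \<le> w" "w \<le> u"
  shows "L w 1 = w"
  using tdf_le_left[OF L w(1), of 1] tdf_increment_le[OF L w, of 1] fixed by simp

lemma tdf_section_greatest_fixed_point:
  assumes L: "is_tdf L"
  obtains \<alpha> where "0 \<le> \<alpha>" "\<alpha> \<le> 1" "L \<alpha> 1 = \<alpha>" "\<And>u. 0 \<le> u \<Longrightarrow> L u 1 = u \<Longrightarrow> u \<le> \<alpha>"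
proof -
  define F where "F = {u. 0 \<le> u \<and> L u 1 = u}"
  have "0 \<in> F"
    using tdf_left_zero[OF L] by (simp add: F_def)
  have F_le_1: "u \<le> 1" if "u \<in> F" for u
    using that tdf_le_right[OF L, of u 1] by (simp add: F_def)
  then have "bdd_above F"
    unfolding bdd_above_def by blast
  define \<alpha> where "\<alpha> = Sup F"
  have F_le: "u \<le> \<alpha>" if "u \<in> F" for u
    unfolding \<alpha>_def using that \<open>bdd_above F\<close> by (rule cSup_upper)
  have "0 \<le> \<alpha>" "\<alpha> \<le> 1"
    using F_le[OF \<open>0 \<in> F\<close>] F_le_1 \<open>0 \<in> F\<close> unfolding \<alpha>_def by (auto intro: cSup_least)
  have "\<alpha> \<le> L \<alpha> 1"
  proof (rule dense_le)
    fix w assume "w < \<alpha>"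
    then obtain u where "u \<in> F" "w < u"
      using \<open>0 \<in> F\<close> \<open>bdd_above F\<close> less_cSup_iff[of F w] unfolding \<alpha>_def by blast
    then show "w \<le> L \<alpha> 1"
      using tdf_section_fixed_below[OF L, of u w] tdf_mono_left[OF L, of w \<alpha> 1] tdf_nonneg[OF L, of \<alpha> 1]
        \<open>0 \<le> \<alpha>\<close> \<open>w < \<alpha>\<close> by (cases "0 \<le> w") (auto simp: F_def)
  qed
  then have "L \<alpha> 1 = \<alpha>"
    using tdf_le_left[OF L \<open>0 \<le> \<alpha>\<close>, of 1] by simp
  with \<open>0 \<le> \<alpha>\<close> \<open>\<alpha> \<le> 1\<close> F_le show thesis
    by (intro that) (auto simp: F_def)
qed

lemma tdf_section_const_beyond_greatest_fixed_point:
  assumes L: "is_tdf L"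
    and dense: "\<And>x y. 0 < x \<Longrightarrow> x < y \<Longrightarrow>
      \<exists>u. x < u \<and> u < y \<and> (\<exists>d\<in>{0,1}. ((\<lambda>x. L x 1) has_real_derivative d) (at u))"
    and \<alpha>: "0 \<le> \<alpha>" "L \<alpha> 1 = \<alpha>" "\<And>u. 0 \<le> u \<Longrightarrow> L u 1 = u \<Longrightarrow> u \<le> \<alpha>"
    and w: "\<alpha> < w"
  shows "L w 1 = \<alpha>"
proof (rule order.antisym)
  show "L w 1 \<le> \<alpha>"
  proof (rule dense_ge)
    fix y assume "\<alpha> < y"
    define x where "x = (\<alpha> + min y w) / 2"
    have "0 < x" "\<alpha> < x" "x < min y w"
      using \<alpha>(1) \<open>\<alpha> < y\<close> w by (auto simp: x_def)
    then obtain u d where u: "x < u" "u < min y w" and "d \<in> {0, 1}"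
      and d: "((\<lambda>x. L x 1) has_real_derivative d) (at u)"
      using dense[of x "min y w"] by blast
    have "0 < u" "\<alpha> < u"
      using \<open>0 < x\<close> \<open>\<alpha> < x\<close> u by linarith+
    have "d \<noteq> 1"
    proof
      assume "d = 1"
      with d \<open>0 < u\<close> have "u \<le> L u 1"
        using tdf_section_deriv_mult_le[OF L, of u 1] by simp
      then have "L u 1 = u"
        using tdf_le_left[OF L, of u 1] \<open>0 < u\<close> by simp
      with \<alpha>(3)[of u] \<open>0 < u\<close> \<open>\<alpha> < u\<close> show False
        by simp
    qed
    with \<open>d \<in> {0, 1}\<close> d have "((\<lambda>x. L x 1) has_real_derivative 0) (at u)"
      by auto
    then have "L w 1 - L u 1 \<le> 0 * (w - u)"
      using u by (intro increment_le_deriv_mult_of_slopes_decrease[OF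
            tdf_section_slopes_decrease_along_rays[OF L] \<open>0 < u\<close>]) auto
    then show "L w 1 \<le> y"
      using tdf_le_left[OF L, of u 1] \<open>0 < u\<close> u by simp
  qed
  show "\<alpha> \<le> L w 1"
    using tdf_mono_left[OF L \<alpha>(1), of w 1] \<alpha>(2) w by simp
qed

lemma tdf_section_eq_min_of_deriv_01_dense:
  assumes L: "is_tdf L"
    and dense: "\<And>x y. 0 < x \<Longrightarrow> x < y \<Longrightarrow>
      \<exists>u. x < u \<and> u < y \<and> (\<exists>d\<in>{0,1}. ((\<lambda>x. L x 1) has_real_derivative d) (at u))"
  shows "\<exists>\<alpha>\<in>{0..1}. \<forall>x\<ge>0. L x 1 = min x \<alpha>"
proof -
  obtain \<alpha> where \<alpha>: "0 \<le> \<alpha>" "\<alpha> \<le> 1" "L \<alpha> 1 = \<alpha>" "\<And>u. 0 \<le> u \<Longrightarrow> L u 1 = u \<Longrightarrow> u \<le> \<alpha>"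
    by (rule tdf_section_greatest_fixed_point[OF L]) (rule that)
  have "L x 1 = min x \<alpha>" if "0 \<le> x" for x
  proof (cases "x \<le> \<alpha>")
    case True
    then show ?thesis
      using tdf_section_fixed_below[OF L \<alpha>(3) that True] by simp
  next
    case False
    then have "\<alpha> < x"
      by linarith
    with L dense \<alpha>(1,3,4) have "L x 1 = \<alpha>"
      by (rule tdf_section_const_beyond_greatest_fixed_point)
    with False show ?thesis
      by simp
  qed
  with \<alpha>(1,2) show ?thesis
    by (intro bexI[of _ \<alpha>]) auto
qed

theorem mainTheorem9:
  fixes L :: "real \<Rightarrow> real \<Rightarrow> real"
  assumes "is_tdf L"
  shows "((\<exists>\<xi>. is_tdf \<xi> \<and> (\<forall>w1 w2. 0 \<le> w1 \<longrightarrow> 0 \<le> w2 \<longrightarrow> markov_prod \<xi> L w1 w2 = min w1 w2))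
            \<longrightarrow> (\<forall>w1 w2. 0 \<le> w1 \<longrightarrow> 0 \<le> w2 \<longrightarrow> L w1 w2 = min w1 w2))
       \<and> ((\<forall>w1>0. AE w2 in lborel. 0 \<le> w2 \<longrightarrow>
              (\<exists>d\<in>{0,1}. ((\<lambda>x. L x w2) has_real_derivative d) (at w1)))
            \<longrightarrow> (\<exists>\<alpha>\<in>{0..1}. \<forall>w1 w2. 0 \<le> w1 \<longrightarrow> 0 \<le> w2 \<longrightarrow> L w1 w2 = min w1 (\<alpha> * w2)))"
proof (intro conjI impI)
  assume "\<exists>\<xi>. is_tdf \<xi> \<and> (\<forall>w1 w2. 0 \<le> w1 \<longrightarrow> 0 \<le> w2 \<longrightarrow> markov_prod \<xi> L w1 w2 = min w1 w2)"
  then obtain \<xi> where "is_tdf \<xi>" "markov_prod \<xi> L 1 1 = 1"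
    by fastforce
  then have "L 1 1 = 1"
    by (rule tdf_diag_eq_one_of_left_inverse[OF assms])
  then show "\<forall>w1 w2. 0 \<le> w1 \<longrightarrow> 0 \<le> w2 \<longrightarrow> L w1 w2 = min w1 w2"
    using tdf_eq_min_of_section[OF assms tdf_section_eq_min_of_diag[OF assms]] by simp
next
  assume "\<forall>w1>0. AE w2 in lborel. 0 \<le> w2 \<longrightarrow>
    (\<exists>d\<in>{0,1}. ((\<lambda>x. L x w2) has_real_derivative d) (at w1))"
  then have "AE w in lborel. 0 \<le> w \<longrightarrow> (\<exists>d\<in>{0,1}. ((\<lambda>x. L x w) has_real_derivative d) (at 1))"
    by simp
  then obtain \<alpha> where "\<alpha> \<in> {0..1}" "\<forall>x\<ge>0. L x 1 = min x \<alpha>"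
    using tdf_section_eq_min_of_deriv_01_dense[OF assms tdf_section_deriv_01_dense[OF assms]] by blast
  then show "\<exists>\<alpha>\<in>{0..1}. \<forall>w1 w2. 0 \<le> w1 \<longrightarrow> 0 \<le> w2 \<longrightarrow> L w1 w2 = min w1 (\<alpha> * w2)"
    using tdf_eq_min_of_section[OF assms] by blast
qed

end
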